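(* Let $\mathcal{A}$ be an algorithm, executed by asynchronous processes, that accesses a racing object whose laps are decidable objects. Suppose that in $\mathcal{A}$, whenever a process $p$ enters a new object, the last object previously left by $p$ (if any) is decided at that time. Then, in every execution $\rho$ of $\mathcal{A}$, at the time a process $p$ enters an object $o$, every object $o'$ with $o' \ll_{\rho} o$ is decided.
   Context: Decidable objects: each such object is either undecided or decided at any point of an execution; it starts undecided, and once it is decided it remains decided for the rest of the execution. Racing object: a shared object whose domain is a set of objects called laps. A process invokes its operation enter(), which returns a lap; the process then enters that lap, and it leaves the lap it had previously entered (if any) when it enters a new one. For every execution $\rho$, the set of laps entered during $\rho$ is totally ordered by an order $\ll_{\rho}$, and the racing satisfies the ordering property: whenever a process $p$ enters a lap $l$ in $\rho$, either (a) the lap $p$ has just left is the greatest lap smaller than $l$ with respect to $\ll_{\rho}$ among the laps entered during $\rho$, or (b) some process left $l$ before $p$ enters $l$. *)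

theory Defs
  imports Main
begin

text \<open>
  Time is discrete (steps 0,1,2,...), processes act asynchronously,
  i.e. steps of different processes are interleaved arbitrarily.
  An execution consists of
  \<^item> ev: at step t, either some process p enters the lap l returned by its enter()
        (ev t = Some (p, l)), or some other step happens (ev t = None);
  \<^item> dec: dec l t means the decidable object l is decided at time t;
  \<^item> lt: the order on laps associated with the execution by the racing object.
\<close>

record ('p, 'l) execution =
  ev  :: "nat \<Rightarrow> ('p \<times> 'l) option"
  dec :: "'l \<Rightarrow> nat \<Rightarrow> bool"
  lt  :: "'l \<Rightarrow> 'l \<Rightarrow> bool"

definition enters :: "('p, 'l) execution \<Rightarrow> nat \<Rightarrow> 'p \<Rightarrow> 'l \<Rightarrow> bool" where
  "enters \<rho> t p l \<longleftrightarrow> ev \<rho> t = Some (p, l)"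

text \<open>The lap entered most recently by p strictly before time t (if any);
  this is the lap p leaves when it enters a lap at time t.\<close>
definition last_lap :: "('p, 'l) execution \<Rightarrow> 'p \<Rightarrow> nat \<Rightarrow> 'l option" where
  "last_lap \<rho> p t =
     (if \<exists>s<t. \<exists>l. enters \<rho> s p l
      then Some (snd (the (ev \<rho> (GREATEST s. s < t \<and> (\<exists>l. enters \<rho> s p l)))))
      else None)"

definition left_before :: "('p, 'l) execution \<Rightarrow> 'p \<Rightarrow> 'l \<Rightarrow> nat \<Rightarrow> bool" where
  "left_before \<rho> q l t \<longleftrightarrow> (\<exists>s<t. \<exists>l'. enters \<rho> s q l' \<and> last_lap \<rho> q s = Some l)"

definition entered_laps :: "('p, 'l) execution \<Rightarrow> 'l set" where
  "entered_laps \<rho> = {l. \<exists>t p. enters \<rho> t p l}"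

definition greatest_below :: "('l \<Rightarrow> 'l \<Rightarrow> bool) \<Rightarrow> 'l set \<Rightarrow> 'l \<Rightarrow> 'l option \<Rightarrow> bool" where
  "greatest_below r L l x \<longleftrightarrow>
     (case x of
        None \<Rightarrow> \<not> (\<exists>y\<in>L. r y l)
      | Some y \<Rightarrow> y \<in> L \<and> r y l \<and> (\<forall>z\<in>L. r z l \<longrightarrow> \<not> r y z))"

definition strict_total_order_on :: "'l set \<Rightarrow> ('l \<Rightarrow> 'l \<Rightarrow> bool) \<Rightarrow> bool" where
  "strict_total_order_on L r \<longleftrightarrow>
     (\<forall>x\<in>L. \<not> r x x) \<and>
     (\<forall>x\<in>L. \<forall>y\<in>L. \<forall>z\<in>L. r x y \<longrightarrow> r y z \<longrightarrow> r x z) \<and>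
     (\<forall>x\<in>L. \<forall>y\<in>L. x \<noteq> y \<longrightarrow> r x y \<or> r y x)"

definition decidable_laps :: "('p, 'l) execution \<Rightarrow> bool" where
  "decidable_laps \<rho> \<longleftrightarrow>
     (\<forall>l. \<not> dec \<rho> l 0) \<and> (\<forall>l t t'. dec \<rho> l t \<longrightarrow> t \<le> t' \<longrightarrow> dec \<rho> l t')"

definition racing :: "('p, 'l) execution \<Rightarrow> bool" where
  "racing \<rho> \<longleftrightarrow>
     strict_total_order_on (entered_laps \<rho>) (lt \<rho>) \<and>
     (\<forall>t p l. enters \<rho> t p l \<longrightarrow>
        greatest_below (lt \<rho>) (entered_laps \<rho>) l (last_lap \<rho> p t) \<or>
        (\<exists>q. left_before \<rho> q l t))"

end

theory Submission
  imports Defs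
begin

text \<open>Strong induction on the time of entry. Let p enter o at time t and let o' \<ll> o.
  If the ordering property holds through clause (a), the lap l that p has just left is the
  greatest lap below o, so either o' = l, which is decided by hypothesis, or o' \<ll> l, and l
  was entered by p before t. If it holds through clause (b), some process left o before t,
  so o itself was entered before t. In the last two cases the induction hypothesis at that
  earlier entry applies, and decisions are permanent.\<close>

lemma last_lap_Some_entered:
  assumes "last_lap \<rho> p t = Some l"
  shows "\<exists>s<t. enters \<rho> s p l"
proof -
  let ?P = "\<lambda>s. s < t \<and> (\<exists>l. enters \<rho> s p l)"
  have ex: "\<exists>s. ?P s"
    using assms unfolding last_lap_def by (auto split: if_splits)
  have "?P (Greatest ?P)"
    by (rule GreatestI_ex_nat[where b = t]) (use ex in auto)
  then obtain l' where "Greatest ?P < t" "enters \<rho> (Greatest ?P) p l'"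
    by blast
  moreover have "l' = l"
    using assms ex calculation(2) unfolding last_lap_def enters_def by auto
  ultimately show ?thesis
    by blast
qed

lemma decided_mono:
  assumes "decidable_laps \<rho>" "dec \<rho> l s" "s \<le> t"
  shows "dec \<rho> l t"
  using assms unfolding decidable_laps_def by blast

lemma racing_lower_lap_cases:
  assumes rac: "racing \<rho>" and ent: "enters \<rho> t p l"
    and l': "l' \<in> entered_laps \<rho>" "lt \<rho> l' l"
  obtains y where "last_lap \<rho> p t = Some y" "l' = y \<or> lt \<rho> l' y"
  | s q where "s < t" "enters \<rho> s q l"
proof -
  have order: "strict_total_order_on (entered_laps \<rho>) (lt \<rho>)"
    and "greatest_below (lt \<rho>) (entered_laps \<rho>) l (last_lap \<rho> p t)
           \<or> (\<exists>q. left_before \<rho> q l t)"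
    using rac ent unfolding racing_def by blast+
  then consider "greatest_below (lt \<rho>) (entered_laps \<rho>) l (last_lap \<rho> p t)"
    | q where "left_before \<rho> q l t"
    by blast
  then show thesis
  proof cases
    case 1
    then obtain y where y: "last_lap \<rho> p t = Some y" "y \<in> entered_laps \<rho>"
        "\<forall>z\<in>entered_laps \<rho>. lt \<rho> z l \<longrightarrow> \<not> lt \<rho> y z"
      using l' unfolding greatest_below_def by (auto split: option.splits)
    then have "l' = y \<or> lt \<rho> l' y"
      using order l' unfolding strict_total_order_on_def by blast
    with y(1) show thesis
      using that(1) by blast
  next
    case 2
    then obtain s where "s < t" "last_lap \<rho> q s = Some l"
      unfolding left_before_def by blast
    moreover obtain s0 where "s0 < s" "enters \<rho> s0 q l"
      using last_lap_Some_entered[OF calculation(2)] by blast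
    ultimately show thesis
      using that(2)[of s0 q] by simp
  qed
qed

lemma lower_laps_decided_on_entry:
  assumes rac: "racing \<rho>" and dcd: "decidable_laps \<rho>"
    and left_decided: "\<And>t p l l'. enters \<rho> t p l \<Longrightarrow> last_lap \<rho> p t = Some l' \<Longrightarrow> dec \<rho> l' t"
  shows "enters \<rho> t p l \<Longrightarrow> l' \<in> entered_laps \<rho> \<Longrightarrow> lt \<rho> l' l \<Longrightarrow> dec \<rho> l' t"
proof (induction t arbitrary: p l rule: less_induct)
  case (less t)
  from rac less.prems show ?case
  proof (cases rule: racing_lower_lap_cases)
    case (1 y)
    have "dec \<rho> y t"
      using left_decided less.prems(1) 1(1) .
    show ?thesis
    proof (cases "l' = y")
      case True
      with \<open>dec \<rho> y t\<close> show ?thesis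
        by simp
    next
      case False
      then have "lt \<rho> l' y"
        using 1(2) by blast
      obtain s where "s < t" "enters \<rho> s p y"
        using last_lap_Some_entered[OF 1(1)] by blast
      then have "dec \<rho> l' s"
        using less.IH less.prems(2) \<open>lt \<rho> l' y\<close> by blast
      then show ?thesis
        using decided_mono[OF dcd] \<open>s < t\<close> by simp
    qed
  next
    case (2 s q)
    then have "dec \<rho> l' s"
      using less.IH less.prems(2,3) by blast
    then show ?thesis
      using decided_mono[OF dcd] \<open>s < t\<close> by simp
  qed
qed

theorem mainTheorem1:
  fixes A :: "('p, 'l) execution set"
  assumes racing: "\<forall>\<rho>\<in>A. racing \<rho>"
    and decidable: "\<forall>\<rho>\<in>A. decidable_laps \<rho>"
    and hyp: "\<forall>\<rho>\<in>A. \<forall>t p l l'. enters \<rho> t p l \<longrightarrow> last_lap \<rho> p t = Some l' \<longrightarrow> dec \<rho> l' t"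
  shows "\<forall>\<rho>\<in>A. \<forall>t p ob ob'. enters \<rho> t p ob \<longrightarrow> ob' \<in> entered_laps \<rho> \<longrightarrow> lt \<rho> ob' ob
           \<longrightarrow> dec \<rho> ob' t"
proof (intro ballI allI impI)
  fix \<rho> t p ob ob'
  assume "\<rho> \<in> A" "enters \<rho> t p ob" "ob' \<in> entered_laps \<rho>" "lt \<rho> ob' ob"
  with racing decidable hyp show "dec \<rho> ob' t"
    using lower_laps_decided_on_entry[of \<rho>] by blast
qed

end
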